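(* For each $p$, let $S_1,\dots,S_p$ be jointly Gaussian random variables of the form $S_i=\eta_i+m_i$, where $m_1,\dots,m_p$ are real constants (possibly depending on $p$) and $(\eta_1,\dots,\eta_p)$ is a centered Gaussian vector with $\operatorname{Var}(\eta_i)=1$ and correlations $r_{ij}=\operatorname{Corr}(\eta_i,\eta_j)$ satisfying $|r_{ij}|<\rho_{|i-j|}$ for $i\neq j$, where $(\rho_m)_{m\ge1}$ is a sequence with $\rho_m<1$ for all $m$ and $\rho_p\log p\to0$ as $p\to\infty$. Assume $$\max_{1\le i\le p}|m_i|=o\big((\log p)^{1/2}\big)\quad\text{as }p\to\infty.$$ Let $|S|_{(1)}\le |S|_{(2)}\le\cdots\le |S|_{(p)}$ denote the order statistics of $|S_1|,\dots,|S_p|$, and for fixed integers $k,\ell$ with $2\le \ell<k$ set $T_k=|S|_{(p-k)}$ and $T_\ell=|S|_{(p-\ell)}$. Then $$\lim_{p\to\infty}P\{kT_k^2>\ell T_\ell^2\}=1.$$ *)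

theory Defs
  imports "HOL-Probability.Probability" "HOL-Library.Landau_Symbols"
begin

definition centered_gaussian_vector ::
  "'a measure \<Rightarrow> nat set \<Rightarrow> (nat \<Rightarrow> 'a \<Rightarrow> real) \<Rightarrow> bool" where
  "centered_gaussian_vector M I X \<longleftrightarrow>
     prob_space M \<and> finite I \<and> (\<forall>i\<in>I. X i \<in> borel_measurable M) \<and>
     (\<forall>c :: nat \<Rightarrow> real.
        (AE \<omega> in M. (\<Sum>i\<in>I. c i * X i \<omega>) = 0) \<or>
        (\<exists>\<sigma>>0. distributed M lborel (\<lambda>\<omega>. \<Sum>i\<in>I. c i * X i \<omega>) (normal_density 0 \<sigma>)))"

definition expect :: "'a measure \<Rightarrow> ('a \<Rightarrow> real) \<Rightarrow> real" where
  "expect M X = integral\<^sup>L M X"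

definition var :: "'a measure \<Rightarrow> ('a \<Rightarrow> real) \<Rightarrow> real" where
  "var M X = integral\<^sup>L M (\<lambda>\<omega>. (X \<omega> - expect M X)\<^sup>2)"

definition cov :: "'a measure \<Rightarrow> ('a \<Rightarrow> real) \<Rightarrow> ('a \<Rightarrow> real) \<Rightarrow> real" where
  "cov M X Y = integral\<^sup>L M (\<lambda>\<omega>. (X \<omega> - expect M X) * (Y \<omega> - expect M Y))"

definition corr :: "'a measure \<Rightarrow> ('a \<Rightarrow> real) \<Rightarrow> ('a \<Rightarrow> real) \<Rightarrow> real" where
  "corr M X Y = cov M X Y / (sqrt (var M X) * sqrt (var M Y))"

text \<open>j-th order statistic (1-indexed, ascending) of x 1, ..., x p.\<close>
definition ord_stat :: "(nat \<Rightarrow> real) \<Rightarrow> nat \<Rightarrow> nat \<Rightarrow> real" where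
  "ord_stat x p j = sort (map x [1..<p+1]) ! (j - 1)"

end

theory Submission
  imports Defs "HOL-Real_Asymp.Real_Asymp"
begin

text \<open>Write \<open>s = sqrt (2 ln p)\<close> and fix a small \<open>e > 0\<close>. By the union bound and the Gaussian tail,
  with probability tending to one all \<open>|\<eta>\<^sub>i|\<close> are at most \<open>(1 + e/2) s\<close>, so \<open>T\<^sub>l \<le> (1 + e) s\<close> because the
  means are \<open>o(s)\<close>. Also, more than \<open>k\<close> of the \<open>\<eta>\<^sub>i\<close> exceed \<open>(1 - e/2) s\<close>, so \<open>T\<^sub>k > (1 - e) s\<close>: this follows
  from the second moment method on a grid of about \<open>p\<^bsup>1-e/2\<^esup>\<close> indices spaced \<open>p\<^bsup>e/2\<^esup>\<close> apart, whose
  correlations are \<open>o(1 / log p)\<close>, applied not to indicators but to exponentially tilted weights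
  truncated to a window above the threshold, whose moments follow from the Gaussian moment generating
  function alone. Choosing \<open>e\<close> with \<open>l (1 + e)\<^sup>2 \<le> k (1 - e)\<^sup>2\<close> gives \<open>k T\<^sub>k\<^sup>2 > l T\<^sub>l\<^sup>2\<close>.\<close>

section \<open>Moments of centered Gaussian vectors\<close>

lemma normal_density_mgf:
  assumes D: "distributed M lborel X (normal_density 0 \<sigma>)" and \<sigma>: "0 < \<sigma>"
  shows "integrable M (\<lambda>\<omega>. exp (t * X \<omega>))"
    and "(\<integral>\<omega>. exp (t * X \<omega>) \<partial>M) = exp (t\<^sup>2 * \<sigma>\<^sup>2 / 2)"
proof -
  have completed_square: "normal_density 0 \<sigma> x * exp (t * x) =
      exp (t\<^sup>2 * \<sigma>\<^sup>2 / 2) * normal_density (t * \<sigma>\<^sup>2) \<sigma> x" for x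
  proof -
    have "- (x - 0)\<^sup>2 / (2 * \<sigma>\<^sup>2) + t * x = t\<^sup>2 * \<sigma>\<^sup>2 / 2 + - (x - t * \<sigma>\<^sup>2)\<^sup>2 / (2 * \<sigma>\<^sup>2)"
      using \<sigma> by (simp add: field_simps power2_eq_square)
    then show ?thesis unfolding normal_density_def
      by (simp add: exp_add[symmetric] mult.commute mult.left_commute)
  qed
  have "integrable lborel (\<lambda>x. normal_density 0 \<sigma> x * exp (t * x))"
    unfolding completed_square using \<sigma> by simp
  then show "integrable M (\<lambda>\<omega>. exp (t * X \<omega>))"
    using distributed_integrable[OF D, of "\<lambda>x. exp (t * x)"] by simp
  have "(\<integral>x. normal_density 0 \<sigma> x * exp (t * x) \<partial>lborel) = exp (t\<^sup>2 * \<sigma>\<^sup>2 / 2)"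
    unfolding completed_square using \<sigma> by simp
  then show "(\<integral>\<omega>. exp (t * X \<omega>) \<partial>M) = exp (t\<^sup>2 * \<sigma>\<^sup>2 / 2)"
    using distributed_integral[OF D, of "\<lambda>x. exp (t * x)"] by simp
qed

lemma degenerate_or_normal_moments:
  assumes "prob_space M" and [measurable]: "Y \<in> borel_measurable M"
    and "(AE \<omega> in M. Y \<omega> = 0) \<or> (\<exists>\<sigma>>0. distributed M lborel Y (normal_density 0 \<sigma>))"
  shows "integrable M (\<lambda>\<omega>. (Y \<omega>)\<^sup>2)" "expect M Y = 0"
    "integrable M (\<lambda>\<omega>. exp (t * Y \<omega>))"
    "expect M (\<lambda>\<omega>. exp (t * Y \<omega>)) = exp (t\<^sup>2 * var M Y / 2)"
proof -
  interpret prob_space M by fact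
  have "integrable M (\<lambda>\<omega>. (Y \<omega>)\<^sup>2) \<and> expect M Y = 0 \<and> integrable M (\<lambda>\<omega>. exp (t * Y \<omega>)) \<and>
      expect M (\<lambda>\<omega>. exp (t * Y \<omega>)) = exp (t\<^sup>2 * var M Y / 2)"
    using assms(3)
  proof
    assume AE: "AE \<omega> in M. Y \<omega> = 0"
    have mean: "expect M Y = 0"
      unfolding expect_def using integral_cong_AE[of Y M "\<lambda>_. 0"] AE by auto
    have "AE \<omega> in M. (Y \<omega>)\<^sup>2 = 0" "AE \<omega> in M. exp (t * Y \<omega>) = 1"
      using AE by (auto elim: AE_mp)
    then have "integrable M (\<lambda>\<omega>. (Y \<omega>)\<^sup>2)" "var M Y = 0"
      "integrable M (\<lambda>\<omega>. exp (t * Y \<omega>))" "expect M (\<lambda>\<omega>. exp (t * Y \<omega>)) = 1"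
      unfolding var_def expect_def mean
      by (simp_all add: integrable_cong_AE[where g="\<lambda>_. 0"] integrable_cong_AE[where g="\<lambda>_. 1"]
          integral_cong_AE[where g="\<lambda>_. 0"] integral_cong_AE[where g="\<lambda>_. 1"] prob_space)
    then show ?thesis using mean by simp
  next
    assume "\<exists>\<sigma>>0. distributed M lborel Y (normal_density 0 \<sigma>)"
    then obtain \<sigma> where \<sigma>: "\<sigma> > 0" and D: "distributed M lborel Y (normal_density 0 \<sigma>)"
      by blast
    have "integrable lborel (\<lambda>x. normal_density 0 \<sigma> x * (x - 0) ^ 2)"
      using \<sigma> by (rule integrable_normal_moment)
    then have "integrable M (\<lambda>\<omega>. (Y \<omega>)\<^sup>2)"
      using distributed_integrable[OF D, of "\<lambda>x. x\<^sup>2"] by simp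
    moreover have "expect M Y = 0"
      unfolding expect_def using normal_distributed_expectation[OF \<sigma> D] by simp
    moreover have "var M Y = \<sigma>\<^sup>2"
      unfolding var_def expect_def using normal_distributed_variance[OF \<sigma> D] by simp
    ultimately show ?thesis using normal_density_mgf[OF D \<sigma>, of t] by (simp add: expect_def)
  qed
  then show "integrable M (\<lambda>\<omega>. (Y \<omega>)\<^sup>2)" "expect M Y = 0"
    "integrable M (\<lambda>\<omega>. exp (t * Y \<omega>))"
    "expect M (\<lambda>\<omega>. exp (t * Y \<omega>)) = exp (t\<^sup>2 * var M Y / 2)" by auto
qed

lemma centered_gaussian_vector_prob_space:
  "centered_gaussian_vector M I X \<Longrightarrow> prob_space M"
  unfolding centered_gaussian_vector_def by blast

lemma centered_gaussian_vector_measurable: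
  "centered_gaussian_vector M I X \<Longrightarrow> i \<in> I \<Longrightarrow> X i \<in> borel_measurable M"
  unfolding centered_gaussian_vector_def by blast

lemma centered_gaussian_vector_sum_moments:
  assumes G: "centered_gaussian_vector M I X" and J: "J \<subseteq> I"
  shows "integrable M (\<lambda>\<omega>. (\<Sum>j\<in>J. X j \<omega>)\<^sup>2)" "expect M (\<lambda>\<omega>. \<Sum>j\<in>J. X j \<omega>) = 0"
    "integrable M (\<lambda>\<omega>. exp (t * (\<Sum>j\<in>J. X j \<omega>)))"
    "expect M (\<lambda>\<omega>. exp (t * (\<Sum>j\<in>J. X j \<omega>))) = exp (t\<^sup>2 * var M (\<lambda>\<omega>. \<Sum>j\<in>J. X j \<omega>) / 2)"
proof -
  have "finite I" using G unfolding centered_gaussian_vector_def by blast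
  then have restrict: "(\<Sum>i\<in>I. indicator J i * X i \<omega>) = (\<Sum>j\<in>J. X j \<omega>)" for \<omega>
    using sum.inter_restrict[of I "\<lambda>i. X i \<omega>" J] J by (simp add: indicator_def Int_absorb1)
  have "(AE \<omega> in M. (\<Sum>i\<in>I. indicator J i * X i \<omega>) = 0) \<or>
      (\<exists>\<sigma>>0. distributed M lborel (\<lambda>\<omega>. \<Sum>i\<in>I. indicator J i * X i \<omega>) (normal_density 0 \<sigma>))"
    using G unfolding centered_gaussian_vector_def by blast
  then have "(AE \<omega> in M. (\<Sum>j\<in>J. X j \<omega>) = 0) \<or>
      (\<exists>\<sigma>>0. distributed M lborel (\<lambda>\<omega>. \<Sum>j\<in>J. X j \<omega>) (normal_density 0 \<sigma>))"
    unfolding restrict .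
  moreover have "(\<lambda>\<omega>. \<Sum>j\<in>J. X j \<omega>) \<in> borel_measurable M"
    using J centered_gaussian_vector_measurable[OF G] by (auto intro!: borel_measurable_sum)
  ultimately show "integrable M (\<lambda>\<omega>. (\<Sum>j\<in>J. X j \<omega>)\<^sup>2)" "expect M (\<lambda>\<omega>. \<Sum>j\<in>J. X j \<omega>) = 0"
    "integrable M (\<lambda>\<omega>. exp (t * (\<Sum>j\<in>J. X j \<omega>)))"
    "expect M (\<lambda>\<omega>. exp (t * (\<Sum>j\<in>J. X j \<omega>))) = exp (t\<^sup>2 * var M (\<lambda>\<omega>. \<Sum>j\<in>J. X j \<omega>) / 2)"
    using degenerate_or_normal_moments[OF centered_gaussian_vector_prob_space[OF G]] by blast+
qed

lemma centered_gaussian_vector_standard_component: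
  assumes G: "centered_gaussian_vector M I X" and i: "i \<in> I" and "var M (X i) = 1"
  shows "integrable M (\<lambda>\<omega>. (X i \<omega>)\<^sup>2)" "expect M (X i) = 0"
    "integrable M (\<lambda>\<omega>. exp (t * X i \<omega>))" "expect M (\<lambda>\<omega>. exp (t * X i \<omega>)) = exp (t\<^sup>2 / 2)"
  using centered_gaussian_vector_sum_moments[OF G, of "{i}"] i assms(3)
  by (simp_all add: eta_contract_eq)

lemma centered_gaussian_vector_pair_mgf:
  assumes G: "centered_gaussian_vector M I X" and ij: "i \<in> I" "j \<in> I" "i \<noteq> j"
    and vi: "var M (X i) = 1" and vj: "var M (X j) = 1"
  shows "integrable M (\<lambda>\<omega>. exp (t * (X i \<omega> + X j \<omega>)))"
    "expect M (\<lambda>\<omega>. exp (t * (X i \<omega> + X j \<omega>))) \<le> exp (t\<^sup>2 * (1 + \<bar>corr M (X i) (X j)\<bar>))"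
proof -
  have sum_pair: "(\<Sum>k\<in>{i, j}. X k \<omega>) = X i \<omega> + X j \<omega>" for \<omega>
    using ij by simp
  have "{i, j} \<subseteq> I" using ij by simp
  note S = centered_gaussian_vector_sum_moments[OF G this, unfolded sum_pair]
  note Si = centered_gaussian_vector_standard_component[OF G ij(1) vi]
  note Sj = centered_gaussian_vector_standard_component[OF G ij(2) vj]
  define Y where "Y \<omega> = X i \<omega> + X j \<omega>" for \<omega>
  have polarization: "X i \<omega> * X j \<omega> = ((Y \<omega>)\<^sup>2 - (X i \<omega>)\<^sup>2 - (X j \<omega>)\<^sup>2) / 2" for \<omega>
    unfolding Y_def by (simp add: power2_eq_square field_simps)
  have "cov M (X i) (X j) = (\<integral>\<omega>. ((Y \<omega>)\<^sup>2 - (X i \<omega>)\<^sup>2 - (X j \<omega>)\<^sup>2) / 2 \<partial>M)"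
    unfolding cov_def Si(2) Sj(2) polarization[symmetric] by simp
  also have "\<dots> = (var M Y - var M (X i) - var M (X j)) / 2"
    using S(1,2) Si(1) Sj(1) unfolding var_def Si(2) Sj(2) Y_def by simp
  finally have "var M Y = 2 * (1 + corr M (X i) (X j))"
    unfolding corr_def vi vj by simp
  then have "expect M (\<lambda>\<omega>. exp (t * (X i \<omega> + X j \<omega>))) = exp (t\<^sup>2 * (1 + corr M (X i) (X j)))"
    using S(4)[of t] unfolding Y_def by simp
  also have "\<dots> \<le> exp (t\<^sup>2 * (1 + \<bar>corr M (X i) (X j)\<bar>))"
    by (intro exp_mono mult_left_mono) auto
  finally show "expect M (\<lambda>\<omega>. exp (t * (X i \<omega> + X j \<omega>))) \<le> exp (t\<^sup>2 * (1 + \<bar>corr M (X i) (X j)\<bar>))" .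
  show "integrable M (\<lambda>\<omega>. exp (t * (X i \<omega> + X j \<omega>)))" by (rule S(3))
qed

section \<open>Order statistics\<close>

lemma nth_insort_sorted:
  fixes ys :: "real list"
  assumes "sorted ys" "i \<le> length ys"
  shows "insort a ys ! i = (if i = 0 then (if ys = [] then a else min a (ys ! 0))
     else if i = length ys then max (ys ! (i - 1)) a else max (ys ! (i - 1)) (min a (ys ! i)))"
  using assms
proof (induction ys arbitrary: i)
  case Nil
  then show ?case by simp
next
  case (Cons y ys)
  have y_le: "\<And>z. z \<in> set ys \<Longrightarrow> y \<le> z" and "sorted ys" using Cons.prems(1) by simp_all
  show ?case
  proof (cases "a \<le> y")
    case True
    then have a_le: "a \<le> (y # ys) ! n" if "n < length (y # ys)" for n
      using that y_le by (cases n) (auto simp: order_trans)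
    show ?thesis
    proof (cases i)
      case (Suc i')
      have "insort a (y # ys) ! i = (y # ys) ! i'" using True Suc by simp
      moreover have "a \<le> (y # ys) ! i'" using a_le Suc Cons.prems(2) by simp
      moreover have "min a ((y # ys) ! i) = a" if "i < length (y # ys)"
        using a_le[OF that] by (simp add: min_def)
      ultimately show ?thesis using Suc Cons.prems(2) by (auto simp: max_def intro: order.antisym)
    qed (use True in simp)
  next
    case False
    show ?thesis
    proof (cases i)
      case (Suc i')
      then have IH: "insort a ys ! i' = (if i' = 0 then (if ys = [] then a else min a (ys ! 0))
          else if i' = length ys then max (ys ! (i' - 1)) a else max (ys ! (i' - 1)) (min a (ys ! i')))"
        using Cons.IH \<open>sorted ys\<close> Cons.prems(2) by simp
      have "ys \<noteq> [] \<Longrightarrow> y \<le> ys ! 0" using y_le by (simp add: hd_conv_nth[symmetric])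
      then show ?thesis using False Suc IH by (auto simp: nth_Cons' max_def min_def)
    qed (use False in simp)
  qed
qed

lemma measurable_sort_nth:
  fixes f :: "nat \<Rightarrow> 'a \<Rightarrow> real"
  assumes "\<And>j. j \<in> set xs \<Longrightarrow> f j \<in> borel_measurable M" "i < length xs"
  shows "(\<lambda>\<omega>. sort (map (\<lambda>j. f j \<omega>) xs) ! i) \<in> borel_measurable M"
  using assms
proof (induction xs arbitrary: i)
  case Nil
  then show ?case by simp
next
  case (Cons x xs)
  define S where "S n \<omega> = sort (map (\<lambda>j. f j \<omega>) xs) ! n" for n \<omega>
  have S: "\<And>n. n < length xs \<Longrightarrow> S n \<in> borel_measurable M" and "f x \<in> borel_measurable M"
    unfolding S_def using Cons by auto
  have "sort (map (\<lambda>j. f j \<omega>) (x # xs)) ! i =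
     (if i = 0 then (if xs = [] then f x \<omega> else min (f x \<omega>) (S 0 \<omega>))
     else if i = length xs then max (S (i - 1) \<omega>) (f x \<omega>)
     else max (S (i - 1) \<omega>) (min (f x \<omega>) (S i \<omega>)))" for \<omega>
  proof -
    have "sort (map (\<lambda>j. f j \<omega>) xs) = [] \<longleftrightarrow> xs = []"
      by (metis length_0_conv length_map length_sort)
    then show ?thesis
      using nth_insort_sorted[of "sort (map (\<lambda>j. f j \<omega>) xs)" i "f x \<omega>"] Cons.prems(2)
      by (simp add: S_def)
  qed
  then show ?case
    using Cons.prems(2) S \<open>f x \<in> borel_measurable M\<close>
    by (cases "i = 0"; cases "xs = []"; cases "i = length xs")
      (auto intro!: borel_measurable_max borel_measurable_min)
qed

lemma ord_stat_measurable:
  assumes "\<And>j. j \<in> {1..p} \<Longrightarrow> f j \<in> borel_measurable M" "1 \<le> i" "i \<le> p"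
  shows "(\<lambda>\<omega>. ord_stat (\<lambda>j. f j \<omega>) p i) \<in> borel_measurable M"
  unfolding ord_stat_def by (rule measurable_sort_nth) (use assms in auto)

lemma ord_stat_mem:
  assumes "1 \<le> i" "i \<le> p"
  shows "ord_stat x p i \<in> x ` {1..p}"
proof -
  have "ord_stat x p i \<in> set (sort (map x [1..<p+1]))"
    unfolding ord_stat_def using assms by (intro nth_mem) auto
  then show ?thesis by auto
qed

lemma ord_stat_greater:
  fixes x :: "nat \<Rightarrow> real"
  assumes "k < p" and "k < card {i\<in>{1..p}. A < x i}"
  shows "A < ord_stat x p (p - k)"
proof (rule ccontr)
  define xs where "xs = sort (map x [1..<p+1])"
  have len: "length xs = p" and "sorted xs" unfolding xs_def by simp_all
  assume "\<not> A < ord_stat x p (p - k)"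
  then have "xs ! (p - k - 1) \<le> A" unfolding ord_stat_def xs_def by simp
  moreover have "xs ! i \<le> xs ! (p - k - 1)" if "i < p - k" for i
    using that len assms(1) \<open>sorted xs\<close> by (intro sorted_nth_mono) auto
  ultimately have "xs ! i \<le> A" if "i < p - k" for i
    using that by (meson order_trans)
  then have "y \<le> A" if "y \<in> set (take (p - k) xs)" for y
    using that len by (auto simp: in_set_conv_nth)
  then have "filter (\<lambda>y. A < y) (take (p - k) xs) = []"
    by (simp add: filter_empty_conv not_less)
  then have "length (filter (\<lambda>y. A < y) xs) \<le> length (drop (p - k) xs)"
    by (metis append_take_drop_id filter_append length_append length_filter_le self_append_conv2)
  also have "\<dots> = k" using len assms(1) by simp
  also have "length (filter (\<lambda>y. A < y) xs) = card {i\<in>{1..p}. A < x i}"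
  proof -
    have "length (filter (\<lambda>y. A < y) xs) = length (filter (\<lambda>y. A < y) (map x [1..<p+1]))"
      unfolding xs_def by (metis mset_filter mset_sort size_mset)
    also have "\<dots> = card ({i. A < x i} \<inter> set [1..<p+1])"
      by (simp add: distinct_length_filter comp_def)
    also have "{i. A < x i} \<inter> set [1..<p+1] = {i\<in>{1..p}. A < x i}" by auto
    finally show ?thesis .
  qed
  finally show False using assms(2) by simp
qed

lemma ord_stat_squares_less:
  fixes y m :: "nat \<Rightarrow> real"
  assumes kl: "l < k" "k < p"
    and y_bound: "\<And>i. i \<in> {1..p} \<Longrightarrow> \<bar>y i\<bar> \<le> w" and m_bound: "\<And>i. i \<in> {1..p} \<Longrightarrow> \<bar>m i\<bar> \<le> \<delta>"
    and many: "k < card {i\<in>{1..p}. v < y i}"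
    and "\<delta> \<le> v" and levels: "real l * (w + \<delta>)\<^sup>2 \<le> real k * (v - \<delta>)\<^sup>2"
  shows "real l * (ord_stat (\<lambda>i. \<bar>y i + m i\<bar>) p (p - l))\<^sup>2
       < real k * (ord_stat (\<lambda>i. \<bar>y i + m i\<bar>) p (p - k))\<^sup>2"
proof -
  define T where "T j = ord_stat (\<lambda>i. \<bar>y i + m i\<bar>) p j" for j
  have "v - \<delta> < \<bar>y i + m i\<bar>" if "i \<in> {1..p}" "v < y i" for i
    using m_bound[OF that(1)] that(2) by linarith
  then have "{i\<in>{1..p}. v < y i} \<subseteq> {i\<in>{1..p}. v - \<delta> < \<bar>y i + m i\<bar>}"
    by blast
  then have "card {i\<in>{1..p}. v < y i} \<le> card {i\<in>{1..p}. v - \<delta> < \<bar>y i + m i\<bar>}"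
    by (intro card_mono) auto
  then have "v - \<delta> < T (p - k)"
    unfolding T_def using kl many by (intro ord_stat_greater) auto
  then have "real k * (v - \<delta>)\<^sup>2 < real k * (T (p - k))\<^sup>2"
    using \<open>\<delta> \<le> v\<close> kl by (intro mult_strict_left_mono power_strict_mono) auto
  moreover have "T (p - l) \<in> (\<lambda>i. \<bar>y i + m i\<bar>) ` {1..p}"
    unfolding T_def using kl by (intro ord_stat_mem) auto
  then obtain i where "i \<in> {1..p}" "T (p - l) = \<bar>y i + m i\<bar>" by blast
  then have "T (p - l) \<le> w + \<delta>" and "0 \<le> T (p - l)"
    using y_bound m_bound by (smt (verit))+
  then have "real l * (T (p - l))\<^sup>2 \<le> real l * (w + \<delta>)\<^sup>2"
    by (intro mult_left_mono power_mono) auto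
  ultimately show ?thesis
    unfolding T_def[symmetric] using levels by linarith
qed

section \<open>The second moment method\<close>

lemma (in prob_space) sum_bounded_second_moments:
  fixes Z :: "'i \<Rightarrow> 'a \<Rightarrow> real" and B \<alpha> \<beta> \<gamma> :: real
  assumes fin: "finite G"
    and meas: "\<And>i. i \<in> G \<Longrightarrow> Z i \<in> borel_measurable M"
    and bnd: "\<And>i \<omega>. i \<in> G \<Longrightarrow> \<omega> \<in> space M \<Longrightarrow> 0 \<le> Z i \<omega> \<and> Z i \<omega> \<le> B"
    and lo: "\<And>i. i \<in> G \<Longrightarrow> \<alpha> \<le> expectation (Z i)"
    and hi: "\<And>i. i \<in> G \<Longrightarrow> expectation (Z i) \<le> \<beta>"
    and pair: "\<And>i j. i \<in> G \<Longrightarrow> j \<in> G \<Longrightarrow> i \<noteq> j \<Longrightarrow> expectation (\<lambda>\<omega>. Z i \<omega> * Z j \<omega>) \<le> \<gamma>"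
    and "0 \<le> \<alpha>" "0 \<le> \<gamma>"
  shows "integrable M (\<lambda>\<omega>. (\<Sum>i\<in>G. Z i \<omega>)\<^sup>2)"
    and "real (card G) * \<alpha> \<le> expectation (\<lambda>\<omega>. \<Sum>i\<in>G. Z i \<omega>)"
    and "variance (\<lambda>\<omega>. \<Sum>i\<in>G. Z i \<omega>) \<le> real (card G) * B * \<beta> + (real (card G))\<^sup>2 * (\<gamma> - \<alpha>\<^sup>2)"
proof -
  define q where "q = real (card G)"
  have int: "integrable M (Z i)" if "i \<in> G" for i
    by (rule integrable_const_bound[where B=B]) (use bnd that meas in \<open>auto intro!: AE_I2\<close>)
  have B_nonneg: "0 \<le> B" if "i \<in> G" for i
    using bnd[OF that] not_empty by fastforce
  have int_prod: "integrable M (\<lambda>\<omega>. Z i \<omega> * Z j \<omega>)" if "i \<in> G" "j \<in> G" for i j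
    by (rule integrable_const_bound[where B="B * B"])
      (use bnd that meas B_nonneg in \<open>auto intro!: AE_I2 mult_mono simp: abs_mult\<close>)
  have square: "(\<Sum>i\<in>G. Z i \<omega>)\<^sup>2 = (\<Sum>i\<in>G. \<Sum>j\<in>G. Z i \<omega> * Z j \<omega>)" for \<omega>
    by (simp add: power2_eq_square sum_product)
  show int_square: "integrable M (\<lambda>\<omega>. (\<Sum>i\<in>G. Z i \<omega>)\<^sup>2)"
    unfolding square using int_prod by simp
  have row: "(\<Sum>j\<in>G. expectation (\<lambda>\<omega>. Z i \<omega> * Z j \<omega>)) \<le> B * \<beta> + (q - 1) * \<gamma>" if i: "i \<in> G" for i
  proof -
    have "expectation (\<lambda>\<omega>. Z i \<omega> * Z i \<omega>) \<le> expectation (\<lambda>\<omega>. B * Z i \<omega>)"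
      using int_prod[OF i i] int[OF i] bnd[OF i] by (intro integral_mono) (auto intro: mult_right_mono)
    also have "\<dots> \<le> B * \<beta>"
      using hi[OF i] B_nonneg[OF i] by (simp add: mult_left_mono)
    finally have "expectation (\<lambda>\<omega>. Z i \<omega> * Z i \<omega>) +
        (\<Sum>j\<in>G - {i}. expectation (\<lambda>\<omega>. Z i \<omega> * Z j \<omega>)) \<le> B * \<beta> + (\<Sum>j\<in>G - {i}. \<gamma>)"
      using i pair by (intro add_mono sum_mono) auto
    moreover have "card G \<ge> 1" using fin i by (metis card_0_eq empty_iff less_one not_le)
    ultimately show ?thesis
      using fin i by (simp add: sum.remove q_def card_Diff_singleton of_nat_diff)
  qed
  have "expectation (\<lambda>\<omega>. (\<Sum>i\<in>G. Z i \<omega>)\<^sup>2) = (\<Sum>i\<in>G. \<Sum>j\<in>G. expectation (\<lambda>\<omega>. Z i \<omega> * Z j \<omega>))"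
    unfolding square using int_prod by (simp add: Bochner_Integration.integral_sum)
  also have "\<dots> \<le> q * (B * \<beta> + (q - 1) * \<gamma>)"
    using sum_mono[OF row] by (simp add: q_def)
  finally have second: "expectation (\<lambda>\<omega>. (\<Sum>i\<in>G. Z i \<omega>)\<^sup>2) \<le> q * (B * \<beta> + (q - 1) * \<gamma>)" .
  have "q * \<alpha> \<le> (\<Sum>i\<in>G. expectation (Z i))"
    using sum_mono[OF lo] by (simp add: q_def)
  also have "\<dots> = expectation (\<lambda>\<omega>. \<Sum>i\<in>G. Z i \<omega>)"
    using int by (simp add: Bochner_Integration.integral_sum)
  finally show first: "real (card G) * \<alpha> \<le> expectation (\<lambda>\<omega>. \<Sum>i\<in>G. Z i \<omega>)" by (simp add: q_def)
  then have "(q * \<alpha>)\<^sup>2 \<le> (expectation (\<lambda>\<omega>. \<Sum>i\<in>G. Z i \<omega>))\<^sup>2"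
    using \<open>0 \<le> \<alpha>\<close> by (intro power_mono) (auto simp: q_def)
  then have "variance (\<lambda>\<omega>. \<Sum>i\<in>G. Z i \<omega>) \<le> q * (B * \<beta> + (q - 1) * \<gamma>) - (q * \<alpha>)\<^sup>2"
    using second int int_square by (subst variance_eq) auto
  also have "\<dots> \<le> q * B * \<beta> + q\<^sup>2 * (\<gamma> - \<alpha>\<^sup>2)"
    using \<open>0 \<le> \<gamma>\<close> by (simp add: q_def power2_eq_square algebra_simps)
  finally show "variance (\<lambda>\<omega>. \<Sum>i\<in>G. Z i \<omega>) \<le> real (card G) * B * \<beta> + (real (card G))\<^sup>2 * (\<gamma> - \<alpha>\<^sup>2)"
    by (simp add: q_def)
qed

lemma (in prob_space) prob_le_below_mean:
  fixes W :: "'a \<Rightarrow> real"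
  assumes [measurable]: "W \<in> borel_measurable M" and "integrable M (\<lambda>\<omega>. (W \<omega>)\<^sup>2)"
    and "variance W \<le> V" and "T < \<mu>" and "\<mu> \<le> expectation W"
  shows "prob {\<omega>\<in>space M. W \<omega> \<le> T} \<le> V / (\<mu> - T)\<^sup>2"
proof -
  have "prob {\<omega>\<in>space M. W \<omega> \<le> T} \<le> prob {\<omega>\<in>space M. \<mu> - T \<le> \<bar>W \<omega> - expectation W\<bar>}"
    using assms(5) by (intro finite_measure_mono) auto
  also have "\<dots> \<le> variance W / (\<mu> - T)\<^sup>2"
    using assms(2,4) by (intro Chebyshev_inequality) auto
  also have "\<dots> \<le> V / (\<mu> - T)\<^sup>2"
    using assms(3) by (simp add: divide_right_mono)
  finally show ?thesis .
qed

lemma (in prob_space) prob_sum_le_second_moment: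
  fixes Z :: "'i \<Rightarrow> 'a \<Rightarrow> real" and G :: "'i set" and B E c \<theta> :: real
  defines "R \<equiv> B / (real (card G) * E)"
  assumes "finite G" "G \<noteq> {}"
    and meas: "\<And>i. i \<in> G \<Longrightarrow> Z i \<in> borel_measurable M"
    and bnd: "\<And>i \<omega>. i \<in> G \<Longrightarrow> \<omega> \<in> space M \<Longrightarrow> 0 \<le> Z i \<omega> \<and> Z i \<omega> \<le> B"
    and mean: "\<And>i. i \<in> G \<Longrightarrow> c * E \<le> expectation (Z i) \<and> expectation (Z i) \<le> E"
    and pair: "\<And>i j. i \<in> G \<Longrightarrow> j \<in> G \<Longrightarrow> i \<noteq> j \<Longrightarrow> expectation (\<lambda>\<omega>. Z i \<omega> * Z j \<omega>) \<le> E\<^sup>2 * exp \<theta>"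
    and "0 < E" "c \<le> 1" "0 \<le> \<theta>" and kR: "real k * R < c"
  shows "prob {\<omega>\<in>space M. (\<Sum>i\<in>G. Z i \<omega>) \<le> real k * B} \<le> (R + exp \<theta> - c\<^sup>2) / (c - real k * R)\<^sup>2"
proof -
  define q where "q = real (card G)"
  have "0 < q" unfolding q_def using assms(2,3) by (simp add: card_gt_0_iff)
  obtain i \<omega> where "i \<in> G" "\<omega> \<in> space M" using assms(3) not_empty by blast
  then have "0 \<le> B" using bnd by (meson order_trans)
  then have "0 \<le> real k * R" unfolding R_def q_def[symmetric] using \<open>0 < q\<close> \<open>0 < E\<close> by simp
  then have "0 < c" using kR by linarith
  have "c\<^sup>2 \<le> 1" using \<open>0 < c\<close> \<open>c \<le> 1\<close> by (simp add: power_le_one)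
  also have "1 \<le> exp \<theta>" using \<open>0 \<le> \<theta>\<close> by simp
  finally have "(c * E)\<^sup>2 \<le> E\<^sup>2 * exp \<theta>"
    unfolding power_mult_distrib by (subst mult.commute, intro mult_right_mono) auto
  note moments = sum_bounded_second_moments[where \<alpha>="c * E" and \<beta>=E and \<gamma>="E\<^sup>2 * exp \<theta>",
      OF \<open>finite G\<close> meas bnd _ _ pair]
  have "prob {\<omega>\<in>space M. (\<Sum>i\<in>G. Z i \<omega>) \<le> real k * B}
      \<le> (q * B * E + q\<^sup>2 * (E\<^sup>2 * exp \<theta> - (c * E)\<^sup>2)) / (q * (c * E) - real k * B)\<^sup>2"
    unfolding q_def
  proof (rule prob_le_below_mean)
    show "real k * B < real (card G) * (c * E)"
      using kR \<open>0 < q\<close> \<open>0 < E\<close> unfolding R_def q_def[symmetric] by (simp add: field_simps)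
  qed (use moments mean meas \<open>0 < c\<close> \<open>0 < E\<close> in auto)
  also have "\<dots> = (R + exp \<theta> - c\<^sup>2) / (c - real k * R)\<^sup>2"
  proof -
    have "q * B * E + q\<^sup>2 * (E\<^sup>2 * exp \<theta> - (c * E)\<^sup>2) = (q * E)\<^sup>2 * (R + exp \<theta> - c\<^sup>2)"
      and "q * (c * E) - real k * B = (q * E) * (c - real k * R)"
      unfolding R_def q_def[symmetric] using \<open>0 < q\<close> \<open>0 < E\<close> by (simp_all add: field_simps power2_eq_square)
    then show ?thesis using \<open>0 < q\<close> \<open>0 < E\<close> by (simp add: power_mult_distrib)
  qed
  finally show ?thesis .
qed

lemma (in prob_space) standard_mgf_affine:
  fixes X :: "'a \<Rightarrow> real"
  assumes "\<And>t. integrable M (\<lambda>\<omega>. exp (t * X \<omega>))"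
    and "\<And>t. expectation (\<lambda>\<omega>. exp (t * X \<omega>)) = exp (t\<^sup>2 / 2)"
  shows "integrable M (\<lambda>\<omega>. exp (c + t * X \<omega>))"
    and "expectation (\<lambda>\<omega>. exp (c + t * X \<omega>)) = exp (c + t\<^sup>2 / 2)"
  using assms[of t] by (simp_all add: exp_add)

lemma (in prob_space) standard_abs_tail:
  assumes [measurable]: "X \<in> borel_measurable M"
    and mgf: "\<And>t. integrable M (\<lambda>\<omega>. exp (t * X \<omega>))"
      "\<And>t. expectation (\<lambda>\<omega>. exp (t * X \<omega>)) = exp (t\<^sup>2 / 2)"
    and "0 \<le> w"
  shows "prob {\<omega>\<in>space M. w < \<bar>X \<omega>\<bar>} \<le> 2 * exp (- (w\<^sup>2) / 2)"
proof -
  let ?A = "{\<omega>\<in>space M. w < \<bar>X \<omega>\<bar>}"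
  have A: "?A \<in> sets M" by measurable
  have bound: "indicator ?A \<omega> \<le> exp (- w\<^sup>2 + w * X \<omega>) + exp (- w\<^sup>2 + (- w) * X \<omega>)" for \<omega>
  proof (cases "\<omega> \<in> ?A")
    case True
    then have "w * w \<le> w * \<bar>X \<omega>\<bar>" using \<open>0 \<le> w\<close> by (intro mult_left_mono) auto
    then have "1 \<le> exp (- w\<^sup>2 + w * X \<omega>) \<or> 1 \<le> exp (- w\<^sup>2 + (- w) * X \<omega>)"
      by (cases "0 \<le> X \<omega>") (auto simp: power2_eq_square)
    then show ?thesis using True by (auto intro: add_increasing add_increasing2)
  qed (simp add: add_nonneg_nonneg)
  have "prob ?A = expectation (indicator ?A)" using A by simp
  also have "\<dots> \<le> expectation (\<lambda>\<omega>. exp (- w\<^sup>2 + w * X \<omega>) + exp (- w\<^sup>2 + (- w) * X \<omega>))"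
  proof (rule integral_mono)
    show "integrable M (indicator ?A :: _ \<Rightarrow> real)"
      by (rule integrable_const_bound[where B=1]) (use A in auto)
    show "integrable M (\<lambda>\<omega>. exp (- w\<^sup>2 + w * X \<omega>) + exp (- w\<^sup>2 + (- w) * X \<omega>))"
      by (intro Bochner_Integration.integrable_add standard_mgf_affine(1)[OF mgf])
  qed (rule bound)
  also have "\<dots> = exp (- w\<^sup>2 + w\<^sup>2 / 2) + exp (- w\<^sup>2 + (- w)\<^sup>2 / 2)"
    using standard_mgf_affine[OF mgf, of "- w\<^sup>2" w] standard_mgf_affine[OF mgf, of "- w\<^sup>2" "- w"]
    by simp
  also have "\<dots> = 2 * exp (- (w\<^sup>2) / 2)" by simp
  finally show ?thesis .
qed

section \<open>Tilted windows\<close>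

text \<open>Under the weight \<open>exp ((v + L) * (x - v))\<close> the standard normal law is tilted to \<open>N(v + L, 1)\<close>,
  so cutting the weight off outside the window \<open>(v, v + 2L]\<close> around the new mean loses little mass
  while making it bounded.\<close>
definition tilted_window :: "real \<Rightarrow> real \<Rightarrow> real \<Rightarrow> real" where
  "tilted_window v L x = (if v < x \<and> x \<le> v + 2 * L then exp ((v + L) * (x - v)) else 0)"

lemma tilted_window_nonneg: "0 \<le> tilted_window v L x"
  unfolding tilted_window_def by simp

lemma tilted_window_le_exp: "tilted_window v L x \<le> exp ((v + L) * (x - v))"
  unfolding tilted_window_def by simp

lemma tilted_window_le:
  assumes "0 \<le> v" "0 \<le> L"
  shows "tilted_window v L x \<le> exp (2 * (v + L) * L)"
proof -
  have "(v + L) * (x - v) \<le> (v + L) * (2 * L)" if "x \<le> v + 2 * L"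
    using that assms by (intro mult_left_mono) auto
  then have "(v + L) * (x - v) \<le> 2 * (v + L) * L" if "x \<le> v + 2 * L"
    using that by (simp add: algebra_simps)
  then show ?thesis unfolding tilted_window_def by auto
qed

lemma tilted_window_pos_imp: "0 < tilted_window v L x \<Longrightarrow> v < x"
  unfolding tilted_window_def by (auto split: if_splits)

lemma tilted_window_measurable[measurable]: "tilted_window v L \<in> borel_measurable borel"
  unfolding tilted_window_def by measurable

text \<open>Outside the window one of the factors \<open>exp (L (v - x))\<close>, \<open>exp (L (x - v - 2L))\<close> is at least 1.\<close>
lemma exp_le_tilted_window:
  assumes "0 \<le> L"
  shows "exp (- (v + L) * v + (v + L) * x) \<le> tilted_window v L x
    + exp (- v\<^sup>2 + v * x) + exp (- v\<^sup>2 - 2 * L * (v + L) + (v + 2 * L) * x)"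
proof -
  define E where "E = exp (- (v + L) * v + (v + L) * x)"
  have E2: "exp (- v\<^sup>2 + v * x) = E * exp (L * (v - x))"
    and E3: "exp (- v\<^sup>2 - 2 * L * (v + L) + (v + 2 * L) * x) = E * exp (L * (x - v - 2 * L))"
    unfolding E_def by (simp_all add: exp_add[symmetric] power2_eq_square algebra_simps)
  have pos: "0 < E * exp (L * (v - x))" "0 < E * exp (L * (x - v - 2 * L))"
    unfolding E_def by simp_all
  consider "v < x \<and> x \<le> v + 2 * L" | "x \<le> v" | "v + 2 * L < x" by linarith
  then show ?thesis
  proof cases
    case 1
    then have "tilted_window v L x = E" unfolding tilted_window_def E_def by (simp add: algebra_simps)
    then show ?thesis unfolding E2 E3 E_def[symmetric] using pos by linarith
  next
    case 2
    then have "E * 1 \<le> E * exp (L * (v - x))"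
      using assms unfolding E_def by (intro mult_left_mono) (auto simp: mult_nonneg_nonneg)
    then show ?thesis unfolding E2 E3 E_def[symmetric] using pos tilted_window_nonneg[of v L x] by linarith
  next
    case 3
    then have "E * 1 \<le> E * exp (L * (x - v - 2 * L))"
      using assms unfolding E_def by (intro mult_left_mono) (auto simp: mult_nonneg_nonneg)
    then show ?thesis unfolding E2 E3 E_def[symmetric] using pos tilted_window_nonneg[of v L x] by linarith
  qed
qed

lemma (in prob_space) tilted_window_expectation:
  fixes X :: "'a \<Rightarrow> real"
  assumes [measurable]: "X \<in> borel_measurable M"
    and mgf: "\<And>t. integrable M (\<lambda>\<omega>. exp (t * X \<omega>))"
      "\<And>t. expectation (\<lambda>\<omega>. exp (t * X \<omega>)) = exp (t\<^sup>2 / 2)"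
    and "0 \<le> v" "0 \<le> L"
  shows "integrable M (\<lambda>\<omega>. tilted_window v L (X \<omega>))"
    and "exp (L\<^sup>2 / 2 - v\<^sup>2 / 2) - 2 * exp (- (v\<^sup>2) / 2) \<le> expectation (\<lambda>\<omega>. tilted_window v L (X \<omega>))"
    and "expectation (\<lambda>\<omega>. tilted_window v L (X \<omega>)) \<le> exp (L\<^sup>2 / 2 - v\<^sup>2 / 2)"
proof -
  note affine = standard_mgf_affine[OF mgf]
  show int: "integrable M (\<lambda>\<omega>. tilted_window v L (X \<omega>))"
    by (rule integrable_const_bound[where B="exp (2 * (v + L) * L)"])
      (use tilted_window_le[OF assms(4,5)] tilted_window_nonneg in auto)
  have tilted: "expectation (\<lambda>\<omega>. exp (- (v + L) * v + (v + L) * X \<omega>)) = exp (L\<^sup>2 / 2 - v\<^sup>2 / 2)"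
    unfolding affine(2) by (simp add: power2_eq_square field_simps)
  have "exp (L\<^sup>2 / 2 - v\<^sup>2 / 2) \<le> expectation (\<lambda>\<omega>. tilted_window v L (X \<omega>)
      + exp (- v\<^sup>2 + v * X \<omega>) + exp (- v\<^sup>2 - 2 * L * (v + L) + (v + 2 * L) * X \<omega>))"
    unfolding tilted[symmetric]
    by (intro integral_mono Bochner_Integration.integrable_add exp_le_tilted_window int affine(1) assms(5))
  also have "\<dots> = expectation (\<lambda>\<omega>. tilted_window v L (X \<omega>))
      + expectation (\<lambda>\<omega>. exp (- v\<^sup>2 + v * X \<omega>))
      + expectation (\<lambda>\<omega>. exp (- v\<^sup>2 - 2 * L * (v + L) + (v + 2 * L) * X \<omega>))"
    by (simp only: Bochner_Integration.integral_add Bochner_Integration.integrable_add int affine(1))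
  also have "\<dots> = expectation (\<lambda>\<omega>. tilted_window v L (X \<omega>)) + 2 * exp (- (v\<^sup>2) / 2)"
    unfolding affine(2) by (simp add: power2_eq_square field_simps)
  finally show "exp (L\<^sup>2 / 2 - v\<^sup>2 / 2) - 2 * exp (- (v\<^sup>2) / 2) \<le> expectation (\<lambda>\<omega>. tilted_window v L (X \<omega>))"
    by simp
  have "tilted_window v L x \<le> exp (- (v + L) * v + (v + L) * x)" for x
    using tilted_window_le_exp[of v L x] by (simp add: algebra_simps)
  then show "expectation (\<lambda>\<omega>. tilted_window v L (X \<omega>)) \<le> exp (L\<^sup>2 / 2 - v\<^sup>2 / 2)"
    unfolding tilted[symmetric] by (intro integral_mono int affine(1))
qed

lemma (in prob_space) tilted_window_product_expectation:
  fixes X Y :: "'a \<Rightarrow> real"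
  assumes [measurable]: "X \<in> borel_measurable M" "Y \<in> borel_measurable M"
    and "integrable M (\<lambda>\<omega>. exp ((v + L) * (X \<omega> + Y \<omega>)))"
    and "expectation (\<lambda>\<omega>. exp ((v + L) * (X \<omega> + Y \<omega>))) \<le> K"
    and "0 \<le> v" "0 \<le> L"
  shows "expectation (\<lambda>\<omega>. tilted_window v L (X \<omega>) * tilted_window v L (Y \<omega>)) \<le> exp (- 2 * (v + L) * v) * K"
proof -
  have bound: "tilted_window v L x * tilted_window v L y \<le> exp (- 2 * (v + L) * v) * exp ((v + L) * (x + y))" for x y
  proof -
    have "tilted_window v L x * tilted_window v L y \<le> exp ((v + L) * (x - v)) * exp ((v + L) * (y - v))"
      using tilted_window_le_exp tilted_window_nonneg by (intro mult_mono) auto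
    also have "\<dots> = exp (- 2 * (v + L) * v) * exp ((v + L) * (x + y))"
      by (simp add: exp_add[symmetric] algebra_simps)
    finally show ?thesis .
  qed
  have "integrable M (\<lambda>\<omega>. tilted_window v L (X \<omega>) * tilted_window v L (Y \<omega>))"
    by (rule integrable_const_bound[where B="exp (2 * (v + L) * L) * exp (2 * (v + L) * L)"])
      (use tilted_window_le[OF assms(5,6)] tilted_window_nonneg in \<open>auto intro!: mult_mono simp: abs_mult\<close>)
  then have "expectation (\<lambda>\<omega>. tilted_window v L (X \<omega>) * tilted_window v L (Y \<omega>))
      \<le> exp (- 2 * (v + L) * v) * expectation (\<lambda>\<omega>. exp ((v + L) * (X \<omega> + Y \<omega>)))"
    using assms(3) bound by (subst integral_mult_right_zero[symmetric]) (intro integral_mono; simp)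
  also have "\<dots> \<le> exp (- 2 * (v + L) * v) * K"
    using assms(4) by (intro mult_left_mono) auto
  finally show ?thesis .
qed

section \<open>Exceedances of a Gaussian vector\<close>

lemma centered_gaussian_vector_prob_abs_gt:
  assumes X: "centered_gaussian_vector M I X" and var1: "\<And>i. i \<in> I \<Longrightarrow> var M (X i) = 1"
    and "0 \<le> w"
  shows "measure M (\<Union>i\<in>I. {\<omega>\<in>space M. w < \<bar>X i \<omega>\<bar>}) \<le> 2 * real (card I) * exp (- (w\<^sup>2) / 2)"
proof -
  interpret prob_space M by (rule centered_gaussian_vector_prob_space[OF X])
  have "finite I" using X unfolding centered_gaussian_vector_def by blast
  then have "prob (\<Union>i\<in>I. {\<omega>\<in>space M. w < \<bar>X i \<omega>\<bar>}) \<le> (\<Sum>i\<in>I. prob {\<omega>\<in>space M. w < \<bar>X i \<omega>\<bar>})"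
    using centered_gaussian_vector_measurable[OF X] by (intro finite_measure_subadditive_finite) auto
  also have "\<dots> \<le> (\<Sum>i\<in>I. 2 * exp (- (w\<^sup>2) / 2))"
    using centered_gaussian_vector_standard_component[OF X _ var1] centered_gaussian_vector_measurable[OF X]
      \<open>0 \<le> w\<close> by (intro sum_mono standard_abs_tail) (auto simp: expect_def)
  finally show ?thesis by simp
qed

lemma card_greater_le_measurable:
  fixes X :: "'i \<Rightarrow> 'a \<Rightarrow> real"
  assumes "finite G" and [measurable]: "\<And>i. i \<in> G \<Longrightarrow> X i \<in> borel_measurable M"
  shows "{\<omega>\<in>space M. card {i\<in>G. v < X i \<omega>} \<le> k} \<in> sets M"
proof -
  have "card {i\<in>G. v < X i \<omega>} = (\<Sum>i\<in>G. if v < X i \<omega> then 1 else 0)" for \<omega>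
    using \<open>finite G\<close> by (simp add: sum.If_cases Int_def)
  then show ?thesis using assms by simp
qed

lemma centered_gaussian_vector_tilted_window_pair:
  assumes X: "centered_gaussian_vector M I X" and ij: "i \<in> I" "j \<in> I" "i \<noteq> j"
    and "var M (X i) = 1" "var M (X j) = 1" and "0 \<le> v" "0 \<le> L"
  shows "expect M (\<lambda>\<omega>. tilted_window v L (X i \<omega>) * tilted_window v L (X j \<omega>))
    \<le> exp (L\<^sup>2 - v\<^sup>2) * exp ((v + L)\<^sup>2 * \<bar>corr M (X i) (X j)\<bar>)"
proof -
  interpret prob_space M by (rule centered_gaussian_vector_prob_space[OF X])
  note pair_mgf = centered_gaussian_vector_pair_mgf[OF X ij assms(5,6), of "v + L", unfolded expect_def]
  have "expectation (\<lambda>\<omega>. tilted_window v L (X i \<omega>) * tilted_window v L (X j \<omega>))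
      \<le> exp (- 2 * (v + L) * v) * exp ((v + L)\<^sup>2 * (1 + \<bar>corr M (X i) (X j)\<bar>))"
    using pair_mgf centered_gaussian_vector_measurable[OF X] ij assms(7,8)
    by (intro tilted_window_product_expectation) auto
  also have "\<dots> = exp (L\<^sup>2 - v\<^sup>2) * exp ((v + L)\<^sup>2 * \<bar>corr M (X i) (X j)\<bar>)"
    by (simp add: exp_add[symmetric] power2_eq_square algebra_simps)
  finally show ?thesis unfolding expect_def .
qed

lemma sum_tilted_window_le:
  assumes "finite G" "0 \<le> v" "0 \<le> L" "card {i\<in>G. v < x i} \<le> k"
  shows "(\<Sum>i\<in>G. tilted_window v L (x i)) \<le> real k * exp (2 * (v + L) * L)"
proof -
  have "(\<Sum>i\<in>G. tilted_window v L (x i)) \<le> (\<Sum>i\<in>G. if v < x i then exp (2 * (v + L) * L) else 0)"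
    using tilted_window_le[OF assms(2,3)] tilted_window_pos_imp tilted_window_nonneg
    by (intro sum_mono) (smt (verit))
  also have "\<dots> = exp (2 * (v + L) * L) * card {i\<in>G. v < x i}"
    using assms(1) by (simp add: sum.If_cases Int_def)
  also have "\<dots> \<le> real k * exp (2 * (v + L) * L)"
    using assms(4) by (simp add: mult.commute)
  finally show ?thesis .
qed

text \<open>At most \<open>k\<close> exceedances of \<open>v\<close> keep the sum of the \<open>tilted_window v L (X i)\<close>, \<open>i \<in> G\<close>, below
  \<open>k exp (2 (v + L) L)\<close>; when \<open>R\<close> is small this is far below its mean, and \<open>\<theta>\<close> controls its variance.\<close>
lemma centered_gaussian_vector_prob_few_exceedances:
  fixes X :: "nat \<Rightarrow> 'a \<Rightarrow> real" and G :: "nat set" and v L \<theta> :: real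
  defines "c \<equiv> 1 - 2 * exp (- (L\<^sup>2) / 2)"
    and "R \<equiv> exp (2 * (v + L) * L) / (real (card G) * exp (L\<^sup>2 / 2 - v\<^sup>2 / 2))"
  assumes X: "centered_gaussian_vector M I X" and var1: "\<And>i. i \<in> I \<Longrightarrow> var M (X i) = 1"
    and G: "G \<subseteq> I" "G \<noteq> {}" and "0 \<le> v" "0 \<le> L" "0 \<le> \<theta>"
    and corr: "\<And>i j. i \<in> G \<Longrightarrow> j \<in> G \<Longrightarrow> i \<noteq> j \<Longrightarrow> (v + L)\<^sup>2 * \<bar>corr M (X i) (X j)\<bar> \<le> \<theta>"
    and kR: "real k * R < c"
  shows "measure M {\<omega>\<in>space M. card {i\<in>G. v < X i \<omega>} \<le> k} \<le> (R + exp \<theta> - c\<^sup>2) / (c - real k * R)\<^sup>2"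
proof -
  interpret prob_space M by (rule centered_gaussian_vector_prob_space[OF X])
  define B where "B = exp (2 * (v + L) * L)"
  define E where "E = exp (L\<^sup>2 / 2 - v\<^sup>2 / 2)"
  define Z where "Z i \<omega> = tilted_window v L (X i \<omega>)" for i \<omega>
  have "finite G" using X G(1) finite_subset unfolding centered_gaussian_vector_def by blast
  have [measurable]: "X i \<in> borel_measurable M" if "i \<in> G" for i
    using that G(1) centered_gaussian_vector_measurable[OF X] by blast
  have pair: "expectation (\<lambda>\<omega>. Z i \<omega> * Z j \<omega>) \<le> E\<^sup>2 * exp \<theta>" if "i \<in> G" "j \<in> G" "i \<noteq> j" for i j
  proof -
    have "expectation (\<lambda>\<omega>. Z i \<omega> * Z j \<omega>)
        \<le> exp (L\<^sup>2 - v\<^sup>2) * exp ((v + L)\<^sup>2 * \<bar>corr M (X i) (X j)\<bar>)"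
      using centered_gaussian_vector_tilted_window_pair[OF X, of i j v L] that G(1) var1
        \<open>0 \<le> v\<close> \<open>0 \<le> L\<close> unfolding Z_def expect_def by blast
    also have "\<dots> \<le> exp (L\<^sup>2 - v\<^sup>2) * exp \<theta>"
      using corr[OF that] by simp
    also have "exp (L\<^sup>2 - v\<^sup>2) = E\<^sup>2"
      unfolding E_def by (simp add: exp_add[symmetric] power2_eq_square field_simps)
    finally show ?thesis .
  qed
  have mean: "c * E \<le> expectation (Z i) \<and> expectation (Z i) \<le> E" if "i \<in> G" for i
    using tilted_window_expectation(2,3)[OF _ centered_gaussian_vector_standard_component(3,4)[OF X _ var1,
        unfolded expect_def] \<open>0 \<le> v\<close> \<open>0 \<le> L\<close>] that G(1)
    unfolding Z_def c_def E_def by (auto simp: algebra_simps exp_add[symmetric])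
  have "measure M {\<omega>\<in>space M. card {i\<in>G. v < X i \<omega>} \<le> k}
      \<le> measure M {\<omega>\<in>space M. (\<Sum>i\<in>G. Z i \<omega>) \<le> real k * B}"
    using sum_tilted_window_le[OF \<open>finite G\<close> \<open>0 \<le> v\<close> \<open>0 \<le> L\<close>] unfolding Z_def B_def
    by (intro finite_measure_mono) (auto, measurable)
  also have "\<dots> \<le> (R + exp \<theta> - c\<^sup>2) / (c - real k * R)\<^sup>2"
  proof -
    have "0 \<le> Z i \<omega> \<and> Z i \<omega> \<le> B" for i \<omega>
      unfolding Z_def B_def using tilted_window_nonneg tilted_window_le[OF \<open>0 \<le> v\<close> \<open>0 \<le> L\<close>] by auto
    moreover have "Z i \<in> borel_measurable M" if "i \<in> G" for i
      unfolding Z_def using that by measurable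
    moreover have "R = B / (real (card G) * E)" "0 < E" "c \<le> 1"
      unfolding R_def B_def E_def c_def by simp_all
    ultimately show ?thesis
      using prob_sum_le_second_moment[where B=B, OF \<open>finite G\<close> G(2) _ _ mean pair _ _ \<open>0 \<le> \<theta>\<close>] kR by simp
  qed
  finally show ?thesis .
qed

lemma centered_gaussian_vector_prob_ord_stat_squares_less:
  fixes X :: "nat \<Rightarrow> 'a \<Rightarrow> real" and m :: "nat \<Rightarrow> real" and G :: "nat set" and v L \<theta> :: real
  defines "c \<equiv> 1 - 2 * exp (- (L\<^sup>2) / 2)"
    and "R \<equiv> exp (2 * (v + L) * L) / (real (card G) * exp (L\<^sup>2 / 2 - v\<^sup>2 / 2))"
  assumes X: "centered_gaussian_vector M {1..p} X" and var1: "\<And>i. i \<in> {1..p} \<Longrightarrow> var M (X i) = 1"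
    and G: "G \<subseteq> {1..p}" "G \<noteq> {}" and "0 \<le> L" "0 \<le> \<theta>" "0 \<le> w"
    and corr: "\<And>i j. i \<in> G \<Longrightarrow> j \<in> G \<Longrightarrow> i \<noteq> j \<Longrightarrow> (v + L)\<^sup>2 * \<bar>corr M (X i) (X j)\<bar> \<le> \<theta>"
    and kR: "real k * R < c" and kl: "l < k" "k < p"
    and m: "\<And>i. i \<in> {1..p} \<Longrightarrow> \<bar>m i\<bar> \<le> \<delta>" and "0 \<le> \<delta>" "\<delta> \<le> v"
    and levels: "real l * (w + \<delta>)\<^sup>2 \<le> real k * (v - \<delta>)\<^sup>2"
  shows "1 - 2 * real p * exp (- (w\<^sup>2) / 2) - (R + exp \<theta> - c\<^sup>2) / (c - real k * R)\<^sup>2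
    \<le> measure M {\<omega> \<in> space M. real l * (ord_stat (\<lambda>i. \<bar>X i \<omega> + m i\<bar>) p (p - l))\<^sup>2
                             < real k * (ord_stat (\<lambda>i. \<bar>X i \<omega> + m i\<bar>) p (p - k))\<^sup>2}"
    (is "_ \<le> measure M ?good")
proof -
  interpret prob_space M by (rule centered_gaussian_vector_prob_space[OF X])
  note [measurable] = centered_gaussian_vector_measurable[OF X]
  define large where "large = (\<Union>i\<in>{1..p}. {\<omega>\<in>space M. w < \<bar>X i \<omega>\<bar>})"
  define few where "few = {\<omega>\<in>space M. card {i\<in>G. v < X i \<omega>} \<le> k}"
  have "finite G" using G(1) finite_subset by blast
  have sets: "large \<in> sets M" "few \<in> sets M"
    unfolding large_def few_def using \<open>finite G\<close> G(1)
    by (auto intro!: card_greater_le_measurable)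
  have [measurable]: "(\<lambda>\<omega>. ord_stat (\<lambda>i. \<bar>X i \<omega> + m i\<bar>) p (p - l)) \<in> borel_measurable M"
    "(\<lambda>\<omega>. ord_stat (\<lambda>i. \<bar>X i \<omega> + m i\<bar>) p (p - k)) \<in> borel_measurable M"
    using kl by (intro ord_stat_measurable; simp)+
  have "?good \<in> sets M" by measurable
  have "space M - (large \<union> few) \<subseteq> ?good"
  proof safe
    fix \<omega> assume "\<omega> \<in> space M" "\<omega> \<notin> large" "\<omega> \<notin> few"
    then have "\<And>i. i \<in> {1..p} \<Longrightarrow> \<bar>X i \<omega>\<bar> \<le> w" and "k < card {i\<in>G. v < X i \<omega>}"
      unfolding large_def few_def by (auto simp: not_less)
    moreover have "card {i\<in>G. v < X i \<omega>} \<le> card {i\<in>{1..p}. v < X i \<omega>}"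
      using G(1) by (intro card_mono) auto
    ultimately show "real l * (ord_stat (\<lambda>i. \<bar>X i \<omega> + m i\<bar>) p (p - l))\<^sup>2
        < real k * (ord_stat (\<lambda>i. \<bar>X i \<omega> + m i\<bar>) p (p - k))\<^sup>2"
      using kl m \<open>\<delta> \<le> v\<close> levels by (intro ord_stat_squares_less) auto
  qed
  then have "1 - prob large - prob few \<le> prob ?good"
    using sets \<open>?good \<in> sets M\<close> finite_measure_mono[of "space M - (large \<union> few)" ?good]
      prob_compl[OF sets.Un[OF sets]] measure_Un_le[OF sets] by auto
  moreover have "prob large \<le> 2 * real p * exp (- (w\<^sup>2) / 2)"
    using centered_gaussian_vector_prob_abs_gt[OF X var1 \<open>0 \<le> w\<close>] unfolding large_def by simp
  moreover have "prob few \<le> (R + exp \<theta> - c\<^sup>2) / (c - real k * R)\<^sup>2"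
    unfolding few_def c_def R_def
    using \<open>0 \<le> \<delta>\<close> \<open>\<delta> \<le> v\<close> kR[unfolded c_def R_def]
    by (intro centered_gaussian_vector_prob_few_exceedances[OF X var1 G _ \<open>0 \<le> L\<close> \<open>0 \<le> \<theta>\<close> corr]) auto
  ultimately show ?thesis by linarith
qed

section \<open>Asymptotics of the parameters\<close>

definition grid :: "nat \<Rightarrow> nat \<Rightarrow> nat set" where
  "grid d p = (\<lambda>j. 1 + j * d) ` {..<p div d}"

lemma grid_subset:
  assumes "1 \<le> d" shows "grid d p \<subseteq> {1..p}"
proof -
  have "1 + j * d \<le> p" if "j < p div d" for j
  proof -
    have "1 + j * d \<le> (j + 1) * d" using assms by simp
    also have "\<dots> \<le> p div d * d" using that by (intro mult_right_mono) auto
    also have "\<dots> \<le> p" by (rule div_times_less_eq_dividend)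
    finally show ?thesis .
  qed
  then show ?thesis unfolding grid_def by auto
qed

lemma card_grid: "1 \<le> d \<Longrightarrow> card (grid d p) = p div d"
  unfolding grid_def by (subst card_image) (auto intro: inj_onI)

lemma grid_gap:
  assumes "1 \<le> d" "i \<in> grid d p" "j \<in> grid d p" "i \<noteq> j"
  shows "d \<le> (if i \<le> j then j - i else i - j)"
proof -
  have gap: "d \<le> (1 + b * d) - (1 + a * d)" if "a < b" for a b
  proof -
    have "(a + 1) * d \<le> b * d" using that by (intro mult_right_mono) auto
    then show ?thesis by (simp add: algebra_simps)
  qed
  obtain a b where "i = 1 + a * d" "j = 1 + b * d" "a \<noteq> b"
    using assms(2-4) unfolding grid_def by auto
  moreover have "a < b \<longleftrightarrow> i \<le> j" using calculation assms(1) by auto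
  ultimately show ?thesis using gap[of a b] gap[of b a] by auto
qed

definition spacing :: "real \<Rightarrow> nat \<Rightarrow> nat" where
  "spacing e p = nat \<lceil>real p powr (e / 2)\<rceil>"

lemma spacing_bounds:
  assumes "1 \<le> p" "0 < e"
  shows "real p powr (e / 2) \<le> spacing e p" "spacing e p \<le> 2 * real p powr (e / 2)" "1 \<le> spacing e p"
proof -
  have "1 \<le> real p powr (e / 2)" using assms by (simp add: ge_one_powr_ge_zero)
  moreover have "real (spacing e p) = real_of_int \<lceil>real p powr (e / 2)\<rceil>"
    unfolding spacing_def using calculation by simp
  ultimately show "real p powr (e / 2) \<le> spacing e p" "spacing e p \<le> 2 * real p powr (e / 2)"
    "1 \<le> spacing e p" by linarith+
qed

lemma eventually_card_grid_spacing_ge: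
  assumes "0 < e" "e < 2"
  shows "eventually (\<lambda>p. real p powr (1 - e / 2) / 4 \<le> card (grid (spacing e p) p)) at_top"
proof -
  have "eventually (\<lambda>p. 4 \<le> real p powr (1 - e / 2)) at_top"
    using assms by real_asymp
  then show ?thesis using eventually_ge_at_top[of 1]
  proof eventually_elim
    case (elim p)
    define d where "d = spacing e p"
    define q where "q = p div d"
    note d = spacing_bounds[OF elim(2) assms(1), folded d_def]
    have "p = d * q + p mod d" "p mod d < d" unfolding q_def using d(3) by simp_all
    then have "real p < real d * (real q + 1)"
      by (metis add_mult_distrib2 mult.right_neutral nat_add_left_cancel_less of_nat_1 of_nat_add
          of_nat_less_iff of_nat_mult)
    also have "\<dots> \<le> 2 * real p powr (e / 2) * (real q + 1)"
      using d(2) by (intro mult_right_mono) auto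
    finally have "real p / real p powr (e / 2) < 2 * (real q + 1)"
      using elim(2) by (simp add: field_simps)
    moreover have "real p powr (1 - e / 2) = real p / real p powr (e / 2)"
      using elim(2) by (simp add: powr_diff)
    ultimately have "real p powr (1 - e / 2) < 2 * (real q + 1)" by simp
    then show ?case using elim(1) card_grid[OF d(3)] unfolding d_def q_def by simp
  qed
qed

text \<open>The parameters at which \<open>centered_gaussian_vector_prob_ord_stat_squares_less\<close> is applied:
  \<open>v = level (1 - e/2) p\<close>, \<open>w = level (1 + e/2) p\<close>, \<open>\<delta> = level (e/2) p\<close>, \<open>L = width p\<close> and
  \<open>G = grid (spacing e p) p\<close>; then \<open>c = window_mass p\<close>, \<open>R = tilt_ratio e p\<close>, and \<open>corr_budget e \<rho> p\<close>
  serves as \<open>\<theta>\<close>.\<close>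
definition level :: "real \<Rightarrow> nat \<Rightarrow> real" where
  "level t p = t * sqrt (2 * ln (real p))"

definition width :: "nat \<Rightarrow> real" where
  "width p = ln (real p) powr (1 / 4)"

definition window_mass :: "nat \<Rightarrow> real" where
  "window_mass p = 1 - 2 * exp (- (width p)\<^sup>2 / 2)"

definition tilt_ratio :: "real \<Rightarrow> nat \<Rightarrow> real" where
  "tilt_ratio e p = exp (2 * (level (1 - e / 2) p + width p) * width p)
     / (real (card (grid (spacing e p) p)) * exp ((width p)\<^sup>2 / 2 - (level (1 - e / 2) p)\<^sup>2 / 2))"

definition corr_budget :: "real \<Rightarrow> (nat \<Rightarrow> real) \<Rightarrow> nat \<Rightarrow> real" where
  "corr_budget e \<rho> p = 16 / e * Max (insert 0 ((\<lambda>n. \<bar>\<rho> n * ln (real n)\<bar>) ` {spacing e p..p}))"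

lemma level_nonneg: "0 \<le> t \<Longrightarrow> 1 \<le> p \<Longrightarrow> 0 \<le> level t p"
  unfolding level_def by simp

lemma level_square: "1 \<le> p \<Longrightarrow> (level t p)\<^sup>2 = t\<^sup>2 * (2 * ln (real p))"
  unfolding level_def by (simp add: power_mult_distrib)

lemma tendsto_union_bound_zero:
  assumes "0 < e"
  shows "((\<lambda>p. 2 * real p * exp (- (level (1 + e / 2) p)\<^sup>2 / 2)) \<longlongrightarrow> 0) at_top"
proof -
  have "1 < (1 + e / 2)\<^sup>2" using assms power_strict_mono[of 1 "1 + e / 2" 2] by simp
  then have "((\<lambda>p. 2 * (real p * exp (- ((1 + e / 2)\<^sup>2 * ln (real p))))) \<longlongrightarrow> 0) at_top"
    by real_asymp
  moreover have "eventually (\<lambda>p. 2 * (real p * exp (- ((1 + e / 2)\<^sup>2 * ln (real p))))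
      = 2 * real p * exp (- (level (1 + e / 2) p)\<^sup>2 / 2)) at_top"
    using eventually_ge_at_top[of 1] by eventually_elim (simp add: level_square)
  ultimately show ?thesis by (rule Lim_transform_eventually)
qed

lemma tendsto_window_mass: "(window_mass \<longlongrightarrow> 1) at_top"
  unfolding window_mass_def width_def by real_asymp

lemma tilt_ratio_le:
  assumes "1 \<le> p" "0 < e" "e < 2"
    and card: "real p powr (1 - e / 2) / 4 \<le> card (grid (spacing e p) p)"
  shows "tilt_ratio e p
    \<le> 4 * exp (2 * (sqrt (2 * ln (real p)) + width p) * width p - (1 - e / 2) * (e / 2) * ln (real p))"
proof -
  define v where "v = level (1 - e / 2) p"
  define L where "L = width p"
  have "0 < real p powr (1 - e / 2) / 4" using assms(1) by simp
  then have card_pos: "0 < real (card (grid (spacing e p) p))" using card by linarith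
  have "0 \<le> L" unfolding L_def width_def by simp
  have "v \<le> sqrt (2 * ln (real p))" unfolding v_def level_def using assms
    by (simp add: mult_left_le_one_le)
  then have "2 * (v + L) * L \<le> 2 * (sqrt (2 * ln (real p)) + L) * L"
    using \<open>0 \<le> L\<close> by (intro mult_right_mono) auto
  moreover have "v\<^sup>2 / 2 = (1 - e / 2)\<^sup>2 * ln (real p)"
    unfolding v_def using assms(1) by (simp add: level_square)
  moreover have "(1 - e / 2)\<^sup>2 * ln (real p) - (1 - e / 2) * ln (real p) = - (1 - e / 2) * (e / 2) * ln (real p)"
    by (simp add: power2_eq_square algebra_simps)
  ultimately have exponent: "2 * (v + L) * L - ((1 - e / 2) * ln (real p) + (L\<^sup>2 / 2 - v\<^sup>2 / 2))
      \<le> 2 * (sqrt (2 * ln (real p)) + L) * L - (1 - e / 2) * (e / 2) * ln (real p)"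
    using zero_le_power2[of L] by linarith
  have "tilt_ratio e p \<le> exp (2 * (v + L) * L) / (real p powr (1 - e / 2) / 4 * exp (L\<^sup>2 / 2 - v\<^sup>2 / 2))"
    unfolding tilt_ratio_def v_def[symmetric] L_def[symmetric]
    using assms card_pos by (intro divide_left_mono mult_right_mono mult_pos_pos) auto
  also have "\<dots> = 4 * exp (2 * (v + L) * L - ((1 - e / 2) * ln (real p) + (L\<^sup>2 / 2 - v\<^sup>2 / 2)))"
    using assms(1) by (simp add: exp_diff powr_def exp_add)
  also have "\<dots> \<le> 4 * exp (2 * (sqrt (2 * ln (real p)) + L) * L - (1 - e / 2) * (e / 2) * ln (real p))"
    using exponent by simp
  finally show ?thesis unfolding L_def .
qed

lemma tendsto_tilt_ratio_zero:
  assumes "0 < e" "e < 1"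
  shows "(tilt_ratio e \<longlongrightarrow> 0) at_top"
proof (rule tendsto_sandwich[where f="\<lambda>_. 0"])
  have "0 < (1 - e / 2) * (e / 2)" using assms by simp
  then show "((\<lambda>p. 4 * exp (2 * (sqrt (2 * ln (real p)) + width p) * width p
      - (1 - e / 2) * (e / 2) * ln (real p))) \<longlongrightarrow> 0) at_top"
    unfolding width_def by real_asymp
  have "eventually (\<lambda>p. real p powr (1 - e / 2) / 4 \<le> card (grid (spacing e p) p)) at_top"
    using assms by (intro eventually_card_grid_spacing_ge) auto
  then show "eventually (\<lambda>p. tilt_ratio e p \<le> 4 * exp (2 * (sqrt (2 * ln (real p)) + width p) * width p
      - (1 - e / 2) * (e / 2) * ln (real p))) at_top"
    using eventually_ge_at_top[of 1] by eventually_elim (use tilt_ratio_le assms in auto)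
qed (simp_all add: tilt_ratio_def)

lemma tendsto_Max_abs_tail_zero:
  fixes g :: "nat \<Rightarrow> real" and d :: "nat \<Rightarrow> nat"
  assumes g: "(g \<longlongrightarrow> 0) at_top" and d: "filterlim d at_top at_top"
  shows "((\<lambda>p. Max (insert 0 ((\<lambda>n. \<bar>g n\<bar>) ` {d p..p}))) \<longlongrightarrow> 0) at_top"
proof (rule order_tendstoI)
  fix a :: real assume "a < 0"
  then show "eventually (\<lambda>p. a < Max (insert 0 ((\<lambda>n. \<bar>g n\<bar>) ` {d p..p}))) at_top"
    by (intro always_eventually allI) (simp add: Max_gr_iff)
next
  fix \<epsilon> :: real assume "0 < \<epsilon>"
  then obtain N where N: "\<And>n. N \<le> n \<Longrightarrow> \<bar>g n\<bar> < \<epsilon>"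
    using g unfolding tendsto_iff eventually_at_top_linorder by force
  have "eventually (\<lambda>p. N \<le> d p) at_top"
    using d by (simp add: filterlim_at_top)
  then show "eventually (\<lambda>p. Max (insert 0 ((\<lambda>n. \<bar>g n\<bar>) ` {d p..p})) < \<epsilon>) at_top"
    by eventually_elim (use N \<open>0 < \<epsilon>\<close> in auto)
qed

lemma filterlim_spacing_at_top:
  assumes "0 < e"
  shows "filterlim (spacing e) at_top at_top"
  unfolding filterlim_at_top
proof
  fix Z :: nat
  have "filterlim (\<lambda>p::nat. real p powr (e / 2)) at_top at_top"
    using assms by real_asymp
  then have "eventually (\<lambda>p. real Z \<le> real p powr (e / 2)) at_top"
    by (simp add: filterlim_at_top)
  then show "eventually (\<lambda>p. Z \<le> spacing e p) at_top"
    using eventually_ge_at_top[of 1]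
    by eventually_elim (use spacing_bounds(1) assms in fastforce)
qed

lemma tendsto_corr_budget_zero:
  assumes "0 < e" and "((\<lambda>n. \<rho> n * ln (real n)) \<longlongrightarrow> 0) at_top"
  shows "(corr_budget e \<rho> \<longlongrightarrow> 0) at_top"
  unfolding corr_budget_def
  by (intro tendsto_mult_right_zero tendsto_Max_abs_tail_zero filterlim_spacing_at_top assms)

lemma level_width_square_le:
  assumes "3 \<le> p" "0 \<le> t" "t \<le> 1"
  shows "(level t p + width p)\<^sup>2 \<le> 8 * ln (real p)"
proof -
  define u where "u = ln (real p)"
  have "exp 1 \<le> real p" using assms(1) exp_le by linarith
  then have "1 \<le> u" unfolding u_def using ln_mono[of "exp 1" "real p"] by simp
  have "level t p \<le> sqrt (2 * u)"
    unfolding level_def u_def using assms \<open>1 \<le> u\<close> u_def by (simp add: mult_left_le_one_le)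
  moreover have "width p \<le> sqrt (2 * u)"
  proof -
    have "width p = u powr (1 / 4)" unfolding width_def u_def ..
    also have "\<dots> \<le> u powr (1 / 2)" using \<open>1 \<le> u\<close> by (intro powr_mono) auto
    also have "\<dots> \<le> sqrt (2 * u)" using \<open>1 \<le> u\<close> by (simp add: powr_half_sqrt)
    finally show ?thesis .
  qed
  moreover have "0 \<le> level t p" "0 \<le> width p"
    using assms by (simp_all add: level_nonneg width_def)
  ultimately have "(level t p + width p)\<^sup>2 \<le> (2 * sqrt (2 * u))\<^sup>2"
    by (intro power_mono) auto
  also have "\<dots> = 8 * u" using \<open>1 \<le> u\<close> by (simp add: power_mult_distrib)
  finally show ?thesis unfolding u_def .
qed

lemma correlation_le_corr_budget:
  assumes "3 \<le> p" "0 < e" "e < 1" "spacing e p \<le> n" "n \<le> p" "\<bar>r\<bar> \<le> \<bar>\<rho> n\<bar>"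
  shows "(level (1 - e / 2) p + width p)\<^sup>2 * \<bar>r\<bar> \<le> corr_budget e \<rho> p"
proof -
  have "0 < real p powr (e / 2)" using assms(1) by simp
  moreover have "real p powr (e / 2) \<le> real n"
    using spacing_bounds(1)[of p e] assms by simp
  ultimately have "e / 2 * ln (real p) \<le> ln (real n)"
    using assms(1) by (metis ln_le_cancel_iff ln_powr less_le_trans of_nat_0_less_iff zero_less_numeral
        order.strict_trans2 mult.commute)
  have "(level (1 - e / 2) p + width p)\<^sup>2 * \<bar>r\<bar> \<le> 8 * ln (real p) * \<bar>\<rho> n\<bar>"
    using level_width_square_le[of p "1 - e / 2"] assms by (intro mult_mono) auto
  also have "\<dots> \<le> 16 / e * (ln (real n) * \<bar>\<rho> n\<bar>)"
  proof -
    have "\<bar>\<rho> n\<bar> * (e / 2 * ln (real p)) \<le> \<bar>\<rho> n\<bar> * ln (real n)"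
      using \<open>e / 2 * ln (real p) \<le> ln (real n)\<close> by (intro mult_left_mono) auto
    then show ?thesis using \<open>0 < e\<close> by (simp add: field_simps)
  qed
  also have "\<dots> = 16 / e * \<bar>\<rho> n * ln (real n)\<bar>"
    using spacing_bounds(3)[of p e] assms by (simp add: abs_mult mult.commute)
  also have "\<dots> \<le> corr_budget e \<rho> p"
    unfolding corr_budget_def using assms \<open>0 < e\<close> by (intro mult_left_mono Max_ge) auto
  finally show ?thesis .
qed

lemma eventually_le_level:
  assumes "f \<in> o(\<lambda>p. sqrt (ln (real p)))" "0 < t"
  shows "eventually (\<lambda>p. f p \<le> level t p) at_top"
proof -
  have "eventually (\<lambda>p. norm (f p) \<le> (t * sqrt 2) * norm (sqrt (ln (real p)))) at_top"
    using assms by (intro landau_o.smallD) auto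
  then show ?thesis using eventually_ge_at_top[of 1]
    by eventually_elim (auto simp: level_def real_sqrt_mult)
qed

lemma margin_choice:
  assumes "2 \<le> l" "l < k"
  shows "real l * (1 + 1 / (8 * real l))\<^sup>2 \<le> real k * (1 - 1 / (8 * real l))\<^sup>2"
proof -
  have "real l * (1 + 1 / (8 * real l))\<^sup>2 = real l + 1 / 4 + 1 / (64 * real l)"
    using assms by (simp add: power2_eq_square field_simps)
  also have "\<dots> \<le> real l + 3 / 4 - 1 / (4 * real l) + 1 / (64 * real l) + 1 / (64 * real l * real l)"
  proof -
    have "1 / (4 * real l) \<le> 1 / 8" using assms by (simp add: field_simps)
    moreover have "0 \<le> 1 / (64 * real l * real l)" by simp
    ultimately show ?thesis by linarith
  qed
  also have "\<dots> = (real l + 1) * (1 - 1 / (8 * real l))\<^sup>2"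
    using assms by (simp add: power2_eq_square field_simps)
  also have "\<dots> \<le> real k * (1 - 1 / (8 * real l))\<^sup>2"
    using assms by (intro mult_right_mono) auto
  finally show ?thesis .
qed

definition prob_lower_bound :: "real \<Rightarrow> (nat \<Rightarrow> real) \<Rightarrow> nat \<Rightarrow> nat \<Rightarrow> real" where
  "prob_lower_bound e \<rho> k p = 1 - 2 * real p * exp (- (level (1 + e / 2) p)\<^sup>2 / 2)
     - (tilt_ratio e p + exp (corr_budget e \<rho> p) - (window_mass p)\<^sup>2)
       / (window_mass p - real k * tilt_ratio e p)\<^sup>2"

lemma tendsto_prob_lower_bound:
  assumes "0 < e" "e < 1" and "((\<lambda>n. \<rho> n * ln (real n)) \<longlongrightarrow> 0) at_top"
  shows "(prob_lower_bound e \<rho> k \<longlongrightarrow> 1) at_top"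
proof -
  have "(prob_lower_bound e \<rho> k \<longlongrightarrow> 1 - 0 - (0 + exp 0 - 1\<^sup>2) / (1 - real k * 0)\<^sup>2) at_top"
    unfolding prob_lower_bound_def
    by (intro tendsto_intros tendsto_union_bound_zero tendsto_tilt_ratio_zero tendsto_window_mass
        tendsto_corr_budget_zero assms) auto
  then show ?thesis by simp
qed

lemma prob_lower_bound_le:
  fixes X :: "nat \<Rightarrow> 'a \<Rightarrow> real" and m :: "nat \<Rightarrow> real" and \<rho> :: "nat \<Rightarrow> real"
  assumes X: "centered_gaussian_vector M {1..p} X" and var1: "\<And>i. i \<in> {1..p} \<Longrightarrow> var M (X i) = 1"
    and corr_bd: "\<And>i j. i \<in> {1..p} \<Longrightarrow> j \<in> {1..p} \<Longrightarrow> i \<noteq> j \<Longrightarrow>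
        \<bar>corr M (X i) (X j)\<bar> < \<rho> (if i \<le> j then j - i else i - j)"
    and p: "3 \<le> p" "k < p" and e: "0 < e" "e < 1" and "l < k"
    and margin: "real l * (1 + e)\<^sup>2 \<le> real k * (1 - e)\<^sup>2"
    and m: "\<And>i. i \<in> {1..p} \<Longrightarrow> \<bar>m i\<bar> \<le> level (e / 2) p"
    and kR: "real k * tilt_ratio e p < window_mass p"
    and G: "grid (spacing e p) p \<noteq> {}"
  shows "prob_lower_bound e \<rho> k p \<le> measure M {\<omega> \<in> space M.
    real l * (ord_stat (\<lambda>i. \<bar>X i \<omega> + m i\<bar>) p (p - l))\<^sup>2 < real k * (ord_stat (\<lambda>i. \<bar>X i \<omega> + m i\<bar>) p (p - k))\<^sup>2}"
proof -
  define G where "G = grid (spacing e p) p"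
  have d: "1 \<le> spacing e p" using spacing_bounds(3)[of p e] p e by simp
  then have "G \<subseteq> {1..p}" unfolding G_def by (rule grid_subset)
  have corr: "(level (1 - e / 2) p + width p)\<^sup>2 * \<bar>corr M (X i) (X j)\<bar> \<le> corr_budget e \<rho> p"
    if "i \<in> G" "j \<in> G" "i \<noteq> j" for i j
  proof -
    define n where "n = (if i \<le> j then j - i else i - j)"
    have "i \<in> {1..p}" "j \<in> {1..p}" using that \<open>G \<subseteq> {1..p}\<close> by auto
    then have "n \<le> p" "\<bar>corr M (X i) (X j)\<bar> \<le> \<bar>\<rho> n\<bar>"
      using corr_bd[of i j] that(3) unfolding n_def by auto
    moreover have "spacing e p \<le> n" using grid_gap[OF d] that unfolding n_def G_def by blast
    ultimately show ?thesis using p e by (intro correlation_le_corr_budget) auto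
  qed
  have "real l * (level (1 + e) p)\<^sup>2 \<le> real k * (level (1 - e) p)\<^sup>2"
    using margin p by (simp add: level_square mult_right_mono flip: mult.assoc)
  moreover have "level (1 + e / 2) p + level (e / 2) p = level (1 + e) p"
    "level (1 - e / 2) p - level (e / 2) p = level (1 - e) p"
    by (simp_all add: level_def algebra_simps)
  ultimately have levels: "real l * (level (1 + e / 2) p + level (e / 2) p)\<^sup>2
      \<le> real k * (level (1 - e / 2) p - level (e / 2) p)\<^sup>2" by simp
  have "level (e / 2) p \<le> level (1 - e / 2) p"
    using e p unfolding level_def by (intro mult_right_mono) auto
  then show ?thesis
    using p e m kR \<open>l < k\<close> G
    unfolding prob_lower_bound_def tilt_ratio_def window_mass_def G_def[symmetric]
    by (intro centered_gaussian_vector_prob_ord_stat_squares_less[OF X var1 \<open>G \<subseteq> {1..p}\<close>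
          _ _ _ _ corr _ _ _ _ _ _ levels])
      (auto simp: width_def corr_budget_def level_nonneg)
qed

lemma eventually_prob_lower_bound_le:
  fixes M :: "nat \<Rightarrow> 'a measure" and \<eta> :: "nat \<Rightarrow> nat \<Rightarrow> 'a \<Rightarrow> real"
    and m :: "nat \<Rightarrow> nat \<Rightarrow> real" and \<rho> :: "nat \<Rightarrow> real"
  assumes gauss: "\<And>p. centered_gaussian_vector (M p) {1..p} (\<eta> p)"
    and var1: "\<And>p i. i \<in> {1..p} \<Longrightarrow> var (M p) (\<eta> p i) = 1"
    and corr_bd: "\<And>p i j. i \<in> {1..p} \<Longrightarrow> j \<in> {1..p} \<Longrightarrow> i \<noteq> j \<Longrightarrow>
        \<bar>corr (M p) (\<eta> p i) (\<eta> p j)\<bar> < \<rho> (if i \<le> j then j - i else i - j)"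
    and mean_small: "(\<lambda>p. Max ((\<lambda>i. \<bar>m p i\<bar>) ` {1..p})) \<in> o(\<lambda>p. sqrt (ln (real p)))"
    and e: "0 < e" "e < 1" and "l < k" and margin: "real l * (1 + e)\<^sup>2 \<le> real k * (1 - e)\<^sup>2"
  shows "eventually (\<lambda>p. prob_lower_bound e \<rho> k p \<le> measure (M p) {\<omega> \<in> space (M p).
      real l * (ord_stat (\<lambda>i. \<bar>\<eta> p i \<omega> + m p i\<bar>) p (p - l))\<^sup>2
    < real k * (ord_stat (\<lambda>i. \<bar>\<eta> p i \<omega> + m p i\<bar>) p (p - k))\<^sup>2}) at_top"
proof -
  have "eventually (\<lambda>p. Max ((\<lambda>i. \<bar>m p i\<bar>) ` {1..p}) \<le> level (e / 2) p) at_top"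
    using e by (intro eventually_le_level mean_small) auto
  then have mean: "eventually (\<lambda>p. \<forall>i\<in>{1..p}. \<bar>m p i\<bar> \<le> level (e / 2) p) at_top"
    by eventually_elim (auto intro: order_trans[OF Max_ge])
  have "((\<lambda>p. window_mass p - real k * tilt_ratio e p) \<longlongrightarrow> 1 - real k * 0) at_top"
    by (intro tendsto_intros tendsto_window_mass tendsto_tilt_ratio_zero e)
  from order_tendstoD(1)[OF this, of 0]
  have kR: "eventually (\<lambda>p. real k * tilt_ratio e p < window_mass p) at_top"
    by simp
  have "eventually (\<lambda>p. 4 \<le> real p powr (1 - e / 2)) at_top"
    using e by real_asymp
  moreover have "eventually (\<lambda>p. real p powr (1 - e / 2) / 4 \<le> card (grid (spacing e p) p)) at_top"
    using e by (intro eventually_card_grid_spacing_ge) auto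
  ultimately have "eventually (\<lambda>p. grid (spacing e p) p \<noteq> {}) at_top"
    by eventually_elim auto
  then show ?thesis using mean kR eventually_ge_at_top[of "max 3 (k + 1)"]
    by eventually_elim (intro prob_lower_bound_le[OF gauss var1 corr_bd _ _ e \<open>l < k\<close> margin]; auto)
qed

theorem lemma1:
  fixes M :: "nat \<Rightarrow> 'a measure"
    and \<eta> :: "nat \<Rightarrow> nat \<Rightarrow> 'a \<Rightarrow> real"
    and m :: "nat \<Rightarrow> nat \<Rightarrow> real"
    and \<rho> :: "nat \<Rightarrow> real"
    and k l :: nat
  assumes gauss: "\<And>p. centered_gaussian_vector (M p) {1..p} (\<eta> p)"
    and var1: "\<And>p i. i \<in> {1..p} \<Longrightarrow> var (M p) (\<eta> p i) = 1"
    and corr_bd: "\<And>p i j. i \<in> {1..p} \<Longrightarrow> j \<in> {1..p} \<Longrightarrow> i \<noteq> j \<Longrightarrow>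
        \<bar>corr (M p) (\<eta> p i) (\<eta> p j)\<bar> < \<rho> (if i \<le> j then j - i else i - j)"
    and rho_lt1: "\<And>n. n \<ge> 1 \<Longrightarrow> \<rho> n < 1"
    and rho_log: "((\<lambda>p. \<rho> p * ln (real p)) \<longlongrightarrow> 0) at_top"
    and mean_small: "(\<lambda>p. Max ((\<lambda>i. \<bar>m p i\<bar>) ` {1..p})) \<in> o(\<lambda>p. sqrt (ln (real p)))"
    and kl: "2 \<le> l" "l < k"
  shows "((\<lambda>p. measure (M p)
            {\<omega> \<in> space (M p).
               real k * (ord_stat (\<lambda>i. \<bar>\<eta> p i \<omega> + m p i\<bar>) p (p - k))\<^sup>2
             > real l * (ord_stat (\<lambda>i. \<bar>\<eta> p i \<omega> + m p i\<bar>) p (p - l))\<^sup>2})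
          \<longlongrightarrow> 1) at_top"
proof -
  define e where "e = 1 / (8 * real l)"
  have e: "0 < e" "e < 1" using kl by (simp_all add: e_def)
  have margin: "real l * (1 + e)\<^sup>2 \<le> real k * (1 - e)\<^sup>2"
    unfolding e_def using margin_choice[OF kl] .
  have upper: "eventually (\<lambda>p. measure (M p) (S p) \<le> 1) at_top" for S
    by (intro always_eventually allI prob_space.prob_le_1 centered_gaussian_vector_prob_space[OF gauss])
  show ?thesis
    by (rule tendsto_sandwich[OF eventually_prob_lower_bound_le[OF gauss var1 corr_bd mean_small e kl(2) margin]
          upper tendsto_prob_lower_bound[OF e rho_log] tendsto_const])
qed

end
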